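(* Let $n\ge 2$, $\mathcal{O}\in\mathcal{C}_{sp}^{(n)}$, $\nu\in(0,1]$, and $\mathcal{J}\in\mathbf{J}_{\mathcal{O}}^{\nu}$. Then there is a constant $\mu_{n,\nu}$ depending only on $n$ and $\nu$ such that $\|\mathcal{J}\|_2\le\mu_{n,\nu}$, $0\le\mu_{n,\nu}<1$.
   Context: $\imath=\sqrt{-1}$. For $1\le i<j\le n$ and real $\phi,\alpha$, $R(i,j,\phi,\alpha)$ is the $n\times n$ matrix equal to $I_n$ except for entries $(i,i)=(j,j)=\cos\phi$, $(i,j)=-e^{\imath\alpha}\sin\phi$, $(j,i)=e^{-\imath\alpha}\sin\phi$. Let $N=n(n-1)/2$. For $A=(a_{st})\in\mathbb{C}^{n\times n}$ let $c_t=(a_{1t},\dots,a_{t-1,t})^T$, $r_s=(a_{s1},\dots,a_{s,s-1})$ ($2\le s,t\le n$) and $\mathrm{ve}(A)=[c_2^T,\dots,c_n^T,r_2,\dots,r_n]^T\in\mathbb{C}^{2N}$. Let $\nu_{ij}$ be the linear map on $\mathbb{C}^{n\times n}$ setting entries $(i,j),(j,i)$ to zero. For $U=R(i,j,\phi,\alpha)$ the Jacobi annihilator $\mathcal{R}_{ij}(U)$ is the $2N\times 2N$ matrix with $\mathcal{R}_{ij}(U)\mathrm{ve}(A)=\mathrm{ve}(\nu_{ij}(U^*AU))$ for all $A$. For $\nu\in[0,1]$, $\mathbf{R}_{ij}^{\nu}=\{\mathcal{R}_{ij}(U): U=R(i,j,\phi,\alpha),\ |\cos\phi|\ge\nu\}$.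 Let $\mathcal{P}_n=\{(r,s):1\le r<s\le n\}$. For an ordering $\mathcal{O}=(i_0,j_0),\dots,(i_{N-1},j_{N-1})$ of $\mathcal{P}_n$ (each pair exactly once), $\mathbf{J}_{\mathcal{O}}^{\nu}=\{\mathcal{R}_{i_{N-1}j_{N-1}}\cdots\mathcal{R}_{i_0j_0}: \mathcal{R}_{i_kj_k}\in\mathbf{R}_{i_kj_k}^{\nu}\}$ is the class of Jacobi operators; $\|\cdot\|_2$ is the spectral norm. Orderings: $\mathcal{C}_c^{(n)}$ is the set of orderings $(1,2),(\tau_3(1),3),(\tau_3(2),3),\dots,(\tau_n(1),n),\dots,(\tau_n(n-1),n)$ with $\tau_j$ a permutation of $\{1,\dots,j-1\}$; $\mathcal{C}_r^{(n)}$ is the set of orderings $(n-1,n),(n-2,\tau_{n-2}(n-1)),(n-2,\tau_{n-2}(n)),\dots,(1,\tau_1(2)),\dots,(1,\tau_1(n))$ with $\tau_i$ a permutation of $\{i+1,\dots,n\}$, $1\le i\le n-2$. The reverse $\mathcal{O}^{\leftarrow}$ of $(i_0,j_0),\dots,(i_r,j_r)$ is $(i_r,j_r),\dots,(i_0,j_0)$. $\overleftarrow{\mathcal{C}}_c^{(n)}$ and $\overleftarrow{\mathcal{C}}_r^{(n)}$ are the sets of orderings whose reverses lie in $\mathcal{C}_c^{(n)}$, resp. $\mathcal{C}_r^{(n)}$, and $\mathcal{C}_{sp}^{(n)}=\mathcal{C}_c^{(n)}\cup\overleftarrow{\mathcal{C}}_c^{(n)}\cup\mathcal{C}_r^{(n)}\cup\overleftarrow{\mathcal{C}}_r^{(n)}$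 (serial orderings with permutations). *)

theory Defs
  imports Complex_Main
begin

text \<open>n x n complex matrices are functions nat => nat => complex, with indices 1..n
  (entries outside 1..n are never read). Vectors of C^{2N} are lists of length 2N;
  2N x 2N matrices are functions nat => nat => complex, indexed 0..2N-1.\<close>

type_synonym cmat = "nat \<Rightarrow> nat \<Rightarrow> complex"

definition NN :: "nat \<Rightarrow> nat" where
  "NN n = n * (n - 1) div 2"

definition mmul :: "nat \<Rightarrow> cmat \<Rightarrow> cmat \<Rightarrow> cmat" where
  "mmul n A B = (\<lambda>s t. \<Sum>k=1..n. A s k * B k t)"

definition adj :: "cmat \<Rightarrow> cmat" where
  "adj A = (\<lambda>s t. cnj (A t s))"

definition rot :: "nat \<Rightarrow> nat \<Rightarrow> real \<Rightarrow> real \<Rightarrow> cmat" where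
  "rot i j \<phi> \<alpha> = (\<lambda>s t.
     if (s = i \<and> t = i) \<or> (s = j \<and> t = j) then complex_of_real (cos \<phi>)
     else if s = i \<and> t = j then - exp (\<i> * complex_of_real \<alpha>) * complex_of_real (sin \<phi>)
     else if s = j \<and> t = i then exp (- (\<i> * complex_of_real \<alpha>)) * complex_of_real (sin \<phi>)
     else if s = t then 1 else 0)"

definition nuij :: "nat \<Rightarrow> nat \<Rightarrow> cmat \<Rightarrow> cmat" where
  "nuij i j A = (\<lambda>s t. if (s = i \<and> t = j) \<or> (s = j \<and> t = i) then 0 else A s t)"

definition ve :: "nat \<Rightarrow> cmat \<Rightarrow> complex list" where
  "ve n A = concat (map (\<lambda>t. map (\<lambda>s. A s t) [1..<t]) [2..<n+1])
          @ concat (map (\<lambda>s. map (\<lambda>t. A s t) [1..<s]) [2..<n+1])"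

definition matvec :: "nat \<Rightarrow> cmat \<Rightarrow> complex list \<Rightarrow> complex list" where
  "matvec m M x = map (\<lambda>p. \<Sum>q<m. M p q * x ! q) [0..<m]"

definition mmul0 :: "nat \<Rightarrow> cmat \<Rightarrow> cmat \<Rightarrow> cmat" where
  "mmul0 m A B = (\<lambda>p q. \<Sum>k<m. A p k * B k q)"

definition id0 :: cmat where
  "id0 = (\<lambda>p q. if p = q then 1 else 0)"

definition vnorm :: "complex list \<Rightarrow> real" where
  "vnorm x = sqrt (\<Sum>z\<leftarrow>x. (cmod z)^2)"

definition spec_norm :: "nat \<Rightarrow> cmat \<Rightarrow> real" where
  "spec_norm m M = Sup {vnorm (matvec m M x) | x. length x = m \<and> vnorm x = 1}"

definition annihilators :: "nat \<Rightarrow> nat \<Rightarrow> nat \<Rightarrow> real \<Rightarrow> cmat set" where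
  "annihilators n i j \<nu> = {M. \<exists>\<phi> \<alpha>. \<nu> \<le> \<bar>cos \<phi>\<bar> \<and>
      (\<forall>A. matvec (2 * NN n) M (ve n A)
           = ve n (nuij i j (mmul n (mmul n (adj (rot i j \<phi> \<alpha>)) A) (rot i j \<phi> \<alpha>))))}"

text \<open>mprod m [R_0,...,R_{r}] = R_r ... R_0.\<close>
fun mprod :: "nat \<Rightarrow> cmat list \<Rightarrow> cmat" where
  "mprod m [] = id0"
| "mprod m (M # Ms) = mmul0 m (mprod m Ms) M"

definition jacobi_ops :: "nat \<Rightarrow> (nat \<times> nat) list \<Rightarrow> real \<Rightarrow> cmat set" where
  "jacobi_ops n ordr \<nu> = {mprod (2 * NN n) Ms | Ms. length Ms = length ordr \<and>
      (\<forall>k < length ordr. Ms ! k \<in> annihilators n (fst (ordr ! k)) (snd (ordr ! k)) \<nu>)}"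

definition Cc :: "nat \<Rightarrow> (nat \<times> nat) list set" where
  "Cc n = {concat (map (\<lambda>j. map (\<lambda>k. (\<tau> j k, j)) [1..<j]) [2..<n+1]) | \<tau>.
             \<forall>j\<in>{2..n}. bij_betw (\<tau> j) {1..<j} {1..<j}}"

definition Cr :: "nat \<Rightarrow> (nat \<times> nat) list set" where
  "Cr n = {concat (map (\<lambda>i. map (\<lambda>k. (i, \<tau> i k)) [i+1..<n+1]) (rev [1..<n])) | \<tau>.
             \<forall>i\<in>{1..<n}. bij_betw (\<tau> i) {i+1..n} {i+1..n}}"

definition Csp :: "nat \<Rightarrow> (nat \<times> nat) list set" where
  "Csp n = Cc n \<union> rev ` Cc n \<union> Cr n \<union> rev ` Cr n"

end

(*
  Through ve, a vector of C^(2N) is the off-diagonal part of an n x n matrix A, its norm is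
  off(A), and each Jacobi annihilator acts as one Jacobi step: rotate rows and columns i, j of A
  and zero the pivot entries (i,j), (j,i). So it suffices that one sweep along any ordering of
  C_sp reduces off(A)^2 by a factor depending only on n and nu.

  A column- or row-cyclic ordering on k+1 indices is such an ordering on k indices followed by
  the k pairs joining the new index z to the old ones. By induction on k, the first part
  contracts the mass inside the old block and leaves the cross mass between z and the block
  unchanged. During the final pass the entry (r,z) is mixed, with cosines of modulus at least
  nu, only with still untouched entries (r,q) of the old block, until it is the pivot and is
  annihilated; so the cross mass is bounded by the annihilated mass plus the inner mass, which
  yields a uniform contraction. Reversed orderings follow by duality: the reversed sweep is the
  adjoint of a forward sweep for the inner product on off-diagonal entries, and Cauchy-Schwarz
  transfers the bound.
*)
theory Submission
  imports Defs "HOL-Analysis.Convex"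
begin

section \<open>Off-diagonal mass\<close>

definition offdiag :: "nat set \<Rightarrow> (nat \<times> nat) set" where
  "offdiag S = {(s, t). s \<in> S \<and> t \<in> S \<and> s \<noteq> t}"

definition off2 :: "nat set \<Rightarrow> cmat \<Rightarrow> real" where
  "off2 S A = (\<Sum>(s, t)\<in>offdiag S. (cmod (A s t))\<^sup>2)"

definition off_inner :: "nat set \<Rightarrow> cmat \<Rightarrow> cmat \<Rightarrow> complex" where
  "off_inner S A B = (\<Sum>(s, t)\<in>offdiag S. A s t * cnj (B s t))"

definition cross2 :: "nat set \<Rightarrow> nat \<Rightarrow> cmat \<Rightarrow> real" where
  "cross2 S z A = (\<Sum>s\<in>S. (cmod (A s z))\<^sup>2 + (cmod (A z s))\<^sup>2)"

lemma finite_offdiag: "finite S \<Longrightarrow> finite (offdiag S)"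
  by (rule finite_subset[of _ "S \<times> S"]) (auto simp: offdiag_def)

lemma offdiag_singleton [simp]: "offdiag {a} = {}"
  by (auto simp: offdiag_def)

lemma sum_offdiag_insert:
  assumes "finite S" "z \<notin> S"
  shows "(\<Sum>p\<in>offdiag (insert z S). g p) = (\<Sum>p\<in>offdiag S. g p) + (\<Sum>s\<in>S. g (s, z) + g (z, s))"
proof -
  let ?L = "(\<lambda>s. (s, z)) ` S" and ?R = "(\<lambda>s. (z, s)) ` S"
  have split: "offdiag (insert z S) = offdiag S \<union> (?L \<union> ?R)"
    using assms(2) by (auto simp: offdiag_def)
  have "(\<Sum>p\<in>offdiag (insert z S). g p) = (\<Sum>p\<in>offdiag S. g p) + (\<Sum>p\<in>?L \<union> ?R. g p)"
    unfolding split
    by (rule sum.union_disjoint) (use assms finite_offdiag[OF assms(1)] in \<open>auto simp: offdiag_def\<close>)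
  also have "(\<Sum>p\<in>?L \<union> ?R. g p) = (\<Sum>p\<in>?L. g p) + (\<Sum>p\<in>?R. g p)"
    by (rule sum.union_disjoint) (use assms in auto)
  also have "(\<Sum>p\<in>?L. g p) + (\<Sum>p\<in>?R. g p) = (\<Sum>s\<in>S. g (s, z) + g (z, s))"
    by (simp add: sum.reindex inj_on_def sum.distrib)
  finally show ?thesis .
qed

lemma sum_offdiag_remove2:
  assumes "finite S" "i \<in> S" "j \<in> S" "i \<noteq> j"
  shows "(\<Sum>p\<in>offdiag S. g p) = (\<Sum>p\<in>offdiag (S - {i, j}). g p)
     + (\<Sum>s\<in>S - {i, j}. g (s, i) + g (i, s) + g (s, j) + g (j, s)) + g (i, j) + g (j, i)"
proof -
  let ?R = "S - {i, j}"
  have S: "S = insert i (insert j ?R)" using assms by auto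
  have fin: "finite ?R" using assms by auto
  have "(\<Sum>p\<in>offdiag S. g p) = (\<Sum>p\<in>offdiag (insert j ?R). g p) + (\<Sum>s\<in>insert j ?R. g (s, i) + g (i, s))"
    by (subst S, rule sum_offdiag_insert) (use assms fin in auto)
  also have "(\<Sum>p\<in>offdiag (insert j ?R). g p) = (\<Sum>p\<in>offdiag ?R. g p) + (\<Sum>s\<in>?R. g (s, j) + g (j, s))"
    by (rule sum_offdiag_insert) (use fin in auto)
  finally show ?thesis using fin by (simp add: sum.distrib algebra_simps)
qed

lemma off2_nonneg: "0 \<le> off2 S A"
  unfolding off2_def by (auto intro: sum_nonneg)

lemma cross2_nonneg: "0 \<le> cross2 S z A"
  unfolding cross2_def by (auto intro: sum_nonneg)

lemma off2_singleton [simp]: "off2 {a} A = 0"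
  by (simp add: off2_def)

lemma off2_insert: "finite S \<Longrightarrow> z \<notin> S \<Longrightarrow> off2 (insert z S) A = off2 S A + cross2 S z A"
  unfolding off2_def cross2_def by (simp add: sum_offdiag_insert)

lemma entry_sq_le_off2:
  assumes "finite S" "r \<in> S" "q \<in> S" "r \<noteq> q"
  shows "(cmod (A r q))\<^sup>2 \<le> off2 S A"
proof -
  have "(r, q) \<in> offdiag S" using assms by (simp add: offdiag_def)
  then show ?thesis
    unfolding off2_def
    using member_le_sum[of "(r, q)" "offdiag S" "\<lambda>(s, t). (cmod (A s t))\<^sup>2"] assms(1)
    by (force simp: finite_offdiag)
qed

lemma off_inner_self: "off_inner S A A = of_real (off2 S A)"
  unfolding off_inner_def off2_def of_real_sum
  by (rule sum.cong) (auto simp: complex_norm_square[symmetric])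

lemma norm_off_inner_sq_le:
  assumes "finite S"
  shows "(cmod (off_inner S U V))\<^sup>2 \<le> off2 S U * off2 S V"
proof -
  have "cmod (off_inner S U V) \<le> (\<Sum>(s, t)\<in>offdiag S. cmod (U s t) * cmod (V s t))"
    unfolding off_inner_def by (rule order_trans[OF norm_sum]) (simp add: case_prod_beta norm_mult)
  then have "(cmod (off_inner S U V))\<^sup>2 \<le> (\<Sum>(s, t)\<in>offdiag S. cmod (U s t) * cmod (V s t))\<^sup>2"
    by (simp add: power_mono)
  also have "\<dots> \<le> off2 S U * off2 S V"
    unfolding off2_def case_prod_beta by (rule Cauchy_Schwarz_ineq_sum)
  finally show ?thesis .
qed

section \<open>Jacobi steps and sweeps\<close>

text \<open>The off-diagonal part of \<open>\<nu>\<^sub>i\<^sub>j(U\<^sup>* A U)\<close> for \<open>U = R(i,j,\<phi>,\<alpha>)\<close>, written with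
  \<open>c = cos \<phi>\<close> and \<open>e = e\<^sup>\<i>\<^sup>\<alpha> sin \<phi>\<close>; the diagonal is irrelevant and left unchanged.\<close>
definition jacobi_step :: "nat \<Rightarrow> nat \<Rightarrow> real \<Rightarrow> complex \<Rightarrow> cmat \<Rightarrow> cmat" where
  "jacobi_step i j c e A = (\<lambda>s t.
     if (s = i \<and> t = j) \<or> (s = j \<and> t = i) then 0
     else if s = t then A s t
     else if s = i then of_real c * A i t + e * A j t
     else if s = j then - cnj e * A i t + of_real c * A j t
     else if t = i then of_real c * A s i + cnj e * A s j
     else if t = j then - e * A s i + of_real c * A s j
     else A s t)"

lemma jacobi_step_pivot [simp]:
  "jacobi_step i j c e A i j = 0" "jacobi_step i j c e A j i = 0"
  by (auto simp: jacobi_step_def)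

lemma jacobi_step_border:
  assumes "i \<noteq> j" "s \<notin> {i, j}"
  shows "jacobi_step i j c e A i s = of_real c * A i s + e * A j s"
    and "jacobi_step i j c e A j s = - cnj e * A i s + of_real c * A j s"
    and "jacobi_step i j c e A s i = of_real c * A s i + cnj e * A s j"
    and "jacobi_step i j c e A s j = - e * A s i + of_real c * A s j"
  using assms by (auto simp: jacobi_step_def)

lemma jacobi_step_outside: "s \<notin> {i, j} \<Longrightarrow> t \<notin> {i, j} \<Longrightarrow> jacobi_step i j c e A s t = A s t"
  by (auto simp: jacobi_step_def)

lemma jacobi_step_swap: "i \<noteq> j \<Longrightarrow> jacobi_step j i c (- cnj e) = jacobi_step i j c e"
  unfolding jacobi_step_def by (intro ext) auto

lemma rotation_norm_sq:
  assumes "c\<^sup>2 + (cmod e)\<^sup>2 = 1"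
  shows "(cmod (of_real c * x + cnj e * y))\<^sup>2 + (cmod (- e * x + of_real c * y))\<^sup>2
         = (cmod x)\<^sup>2 + (cmod y)\<^sup>2"
proof -
  have "(cmod e)\<^sup>2 = 1 - c\<^sup>2" using assms by simp
  then have ee: "e * cnj e = of_real (1 - c\<^sup>2)" by (metis complex_norm_square)
  have "of_real ((cmod (of_real c * x + cnj e * y))\<^sup>2 + (cmod (- e * x + of_real c * y))\<^sup>2)
        = (e * cnj e + of_real (c\<^sup>2)) * (x * cnj x + y * cnj y)"
    unfolding of_real_add complex_norm_square by (simp add: algebra_simps power2_eq_square)
  also have "\<dots> = of_real ((cmod x)\<^sup>2 + (cmod y)\<^sup>2)"
    unfolding ee of_real_add complex_norm_square by (simp add: of_real_diff)
  finally show ?thesis using of_real_eq_iff by blast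
qed

lemma off2_jacobi_step:
  assumes "finite S" "i \<in> S" "j \<in> S" "i \<noteq> j" "c\<^sup>2 + (cmod e)\<^sup>2 = 1"
  shows "off2 S (jacobi_step i j c e A) = off2 S A - (cmod (A i j))\<^sup>2 - (cmod (A j i))\<^sup>2"
proof -
  let ?B = "jacobi_step i j c e A"
  have inner: "(\<Sum>p\<in>offdiag (S - {i, j}). (\<lambda>(s, t). (cmod (?B s t))\<^sup>2) p)
             = (\<Sum>p\<in>offdiag (S - {i, j}). (\<lambda>(s, t). (cmod (A s t))\<^sup>2) p)"
    by (rule sum.cong) (auto simp: offdiag_def jacobi_step_outside)
  have border: "(\<Sum>s\<in>S - {i, j}. (cmod (?B s i))\<^sup>2 + (cmod (?B i s))\<^sup>2 + (cmod (?B s j))\<^sup>2 + (cmod (?B j s))\<^sup>2)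
      = (\<Sum>s\<in>S - {i, j}. (cmod (A s i))\<^sup>2 + (cmod (A i s))\<^sup>2 + (cmod (A s j))\<^sup>2 + (cmod (A j s))\<^sup>2)"
  proof (rule sum.cong[OF refl])
    fix s assume "s \<in> S - {i, j}"
    then show "(cmod (?B s i))\<^sup>2 + (cmod (?B i s))\<^sup>2 + (cmod (?B s j))\<^sup>2 + (cmod (?B j s))\<^sup>2
      = (cmod (A s i))\<^sup>2 + (cmod (A i s))\<^sup>2 + (cmod (A s j))\<^sup>2 + (cmod (A j s))\<^sup>2"
      using rotation_norm_sq[OF assms(5), of "A s i" "A s j"]
        rotation_norm_sq[of c "cnj e" "A i s" "A j s"] assms(5)
      by (simp add: jacobi_step_border[OF assms(4)])
  qed
  show ?thesis
    unfolding off2_def sum_offdiag_remove2[OF assms(1-4)] using inner border by simp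
qed

lemma cross2_jacobi_step:
  assumes "finite S" "i \<in> S" "j \<in> S" "i \<noteq> j" "z \<notin> S" "c\<^sup>2 + (cmod e)\<^sup>2 = 1"
  shows "cross2 S z (jacobi_step i j c e A) = cross2 S z A"
proof -
  let ?R = "S - {i, j}"
  have split: "cross2 S z X = cross2 ?R z X + ((cmod (X i z))\<^sup>2 + (cmod (X j z))\<^sup>2)
      + ((cmod (X z i))\<^sup>2 + (cmod (X z j))\<^sup>2)" for X
  proof -
    have fin: "finite (S - {i})" "j \<in> S - {i}" and R: "S - {i} - {j} = ?R" using assms by auto
    show ?thesis
      unfolding cross2_def sum.remove[OF assms(1,2)] sum.remove[OF fin] R
      by (simp add: algebra_simps)
  qed
  have "z \<noteq> i" "z \<noteq> j" using assms by auto
  then have "cross2 ?R z (jacobi_step i j c e A) = cross2 ?R z A"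
    unfolding cross2_def by (intro sum.cong) (auto simp: jacobi_step_outside)
  with \<open>z \<noteq> i\<close> \<open>z \<noteq> j\<close> show ?thesis
    unfolding split[of "jacobi_step i j c e A"] split[of A]
    using rotation_norm_sq[OF assms(6), of "A z i" "A z j"]
      rotation_norm_sq[of c "cnj e" "A i z" "A j z"] assms(6)
    by (simp add: jacobi_step_border[OF assms(4)])
qed

lemma off_inner_jacobi_step:
  assumes "finite S" "i \<in> S" "j \<in> S" "i \<noteq> j"
  shows "off_inner S (jacobi_step i j c e A) B = off_inner S A (jacobi_step i j c (- e) B)"
proof -
  let ?A = "jacobi_step i j c e A" and ?B = "jacobi_step i j c (- e) B"
  have inner: "(\<Sum>p\<in>offdiag (S - {i, j}). (\<lambda>(s, t). ?A s t * cnj (B s t)) p)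
             = (\<Sum>p\<in>offdiag (S - {i, j}). (\<lambda>(s, t). A s t * cnj (?B s t)) p)"
    by (rule sum.cong) (auto simp: offdiag_def jacobi_step_outside)
  have border: "(\<Sum>s\<in>S - {i, j}. ?A s i * cnj (B s i) + ?A i s * cnj (B i s) + ?A s j * cnj (B s j) + ?A j s * cnj (B j s))
      = (\<Sum>s\<in>S - {i, j}. A s i * cnj (?B s i) + A i s * cnj (?B i s) + A s j * cnj (?B s j) + A j s * cnj (?B j s))"
    by (rule sum.cong[OF refl]) (simp add: jacobi_step_border[OF assms(4)] algebra_simps)
  show ?thesis
    unfolding off_inner_def sum_offdiag_remove2[OF assms(1-4)] using inner border by simp
qed

definition admissible :: "real \<Rightarrow> (real \<times> complex) list \<Rightarrow> bool" where
  "admissible \<nu> cs \<longleftrightarrow> (\<forall>(c, e)\<in>set cs. \<nu> \<le> \<bar>c\<bar> \<and> c\<^sup>2 + (cmod e)\<^sup>2 = 1)"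

definition pairs_in :: "nat set \<Rightarrow> (nat \<times> nat) list \<Rightarrow> bool" where
  "pairs_in S ps \<longleftrightarrow> (\<forall>(i, j)\<in>set ps. i \<in> S \<and> j \<in> S \<and> i \<noteq> j)"

fun sweep :: "(nat \<times> nat) list \<Rightarrow> (real \<times> complex) list \<Rightarrow> cmat \<Rightarrow> cmat" where
  "sweep ((i, j) # ps) ((c, e) # cs) A = sweep ps cs (jacobi_step i j c e A)"
| "sweep _ _ A = A"

lemma admissible_Cons [simp]:
  "admissible \<nu> ((c, e) # cs) \<longleftrightarrow> \<nu> \<le> \<bar>c\<bar> \<and> c\<^sup>2 + (cmod e)\<^sup>2 = 1 \<and> admissible \<nu> cs"
  by (auto simp: admissible_def)

lemma admissible_append [simp]: "admissible \<nu> (xs @ ys) \<longleftrightarrow> admissible \<nu> xs \<and> admissible \<nu> ys"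
  by (auto simp: admissible_def)

lemma pairs_in_Cons [simp]: "pairs_in S ((i, j) # ps) \<longleftrightarrow> i \<in> S \<and> j \<in> S \<and> i \<noteq> j \<and> pairs_in S ps"
  by (auto simp: pairs_in_def)

lemma sweep_append:
  "length ps = length cs \<Longrightarrow> sweep (ps @ ps') (cs @ cs') A = sweep ps' cs' (sweep ps cs A)"
proof (induction ps cs arbitrary: A rule: list_induct2)
  case (Cons p ps c cs)
  then show ?case by (cases p; cases c) simp
qed simp

lemma off2_sweep_le:
  assumes "finite S" "pairs_in S ps" "admissible \<nu> cs" "length ps = length cs"
  shows "off2 S (sweep ps cs A) \<le> off2 S A"
  using assms(4,2,3)
proof (induction ps cs arbitrary: A rule: list_induct2)
  case (Cons p ps ce cs)
  obtain i j c e where "p = (i, j)" "ce = (c, e)" by fastforce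
  with Cons off2_jacobi_step[OF assms(1), of i j c e A] show ?case
    by (simp add: order_trans[OF Cons.IH])
qed simp

lemma cross2_sweep:
  assumes "finite S" "pairs_in S ps" "admissible \<nu> cs" "length ps = length cs" "z \<notin> S"
  shows "cross2 S z (sweep ps cs A) = cross2 S z A"
  using assms(4,2,3)
proof (induction ps cs arbitrary: A rule: list_induct2)
  case (Cons p ps ce cs)
  obtain i j c e where "p = (i, j)" "ce = (c, e)" by fastforce
  with Cons cross2_jacobi_step[OF assms(1) _ _ _ assms(5), of i j c e A] show ?case
    by simp
qed simp

lemma off_inner_sweep:
  assumes "finite S" "pairs_in S ps" "length ps = length cs"
  shows "off_inner S (sweep ps cs A) B
       = off_inner S A (sweep (rev ps) (rev (map (\<lambda>(c, e). (c, - e)) cs)) B)"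
  using assms(3,2)
proof (induction ps cs arbitrary: A B rule: list_induct2)
  case (Cons p ps ce cs)
  obtain i j c e where p: "p = (i, j)" and ce: "ce = (c, e)" by fastforce
  let ?rcs = "rev (map (\<lambda>(c, e). (c, - e)) cs)"
  have "length (rev ps) = length ?rcs" using Cons.hyps by simp
  then have "sweep (rev (p # ps)) (rev (map (\<lambda>(c, e). (c, - e)) (ce # cs))) B
      = jacobi_step i j c (- e) (sweep (rev ps) ?rcs B)"
    by (simp add: p ce sweep_append)
  with Cons off_inner_jacobi_step[OF assms(1), of i j c e A] show ?case
    by (simp add: p ce)
qed simp

lemma sweep_entry_untouched:
  assumes "\<forall>(i, j)\<in>set ps. r \<notin> {i, j} \<and> t \<notin> {i, j}"
  shows "sweep ps cs A r t = A r t"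
  using assms
proof (induction ps cs A rule: sweep.induct)
  case (1 i j ps c e cs A)
  then show ?case by (simp add: jacobi_step_outside)
qed simp_all

section \<open>Serial orderings\<close>

inductive serial :: "nat set \<Rightarrow> (nat \<times> nat) list \<Rightarrow> bool" where
  singleton: "serial {a} []"
| extend: "serial S ps \<Longrightarrow> z \<notin> S \<Longrightarrow> distinct qs \<Longrightarrow> set qs = S \<Longrightarrow>
    \<forall>q\<in>S. f q = (q, z) \<or> f q = (z, q) \<Longrightarrow> serial (insert z S) (ps @ map f qs)"

lemma serial_pairs_in: "serial S ps \<Longrightarrow> finite S \<and> pairs_in S ps"
proof (induction rule: serial.induct)
  case (extend S ps z qs f)
  have "pairs_in (insert z S) (map f qs)"
    unfolding pairs_in_def
  proof
    fix p assume "p \<in> set (map f qs)"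
    then obtain q where "q \<in> S" "p = f q" using extend.hyps(4) by auto
    with extend.hyps(2,5) show "case p of (i, j) \<Rightarrow> i \<in> insert z S \<and> j \<in> insert z S \<and> i \<noteq> j"
      by force
  qed
  with extend.IH show ?case by (auto simp: pairs_in_def)
qed (simp add: pairs_in_def)

lemma sweep_orient:
  assumes "\<forall>q\<in>set qs. f q = (q, z) \<or> f q = (z, q)" "z \<notin> set qs"
    "length qs = length cs" "admissible \<nu> cs"
  shows "\<exists>cs'. length cs' = length qs \<and> admissible \<nu> cs' \<and>
           sweep (map f qs) cs A = sweep (map (\<lambda>q. (q, z)) qs) cs' A"
  using assms(3,1,2,4)
proof (induction qs cs arbitrary: A rule: list_induct2)
  case (Cons q qs ce cs)
  obtain c e where ce: "ce = (c, e)" by fastforce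
  have qz: "q \<noteq> z" and v: "\<nu> \<le> \<bar>c\<bar>" "c\<^sup>2 + (cmod e)\<^sup>2 = 1" using Cons.prems by (auto simp: ce)
  obtain e' where e': "cmod e' = cmod e" and step: "sweep (map f (q # qs)) (ce # cs) A
      = sweep (map f qs) cs (jacobi_step q z c e' A)"
  proof (cases "f q = (q, z)")
    case True
    then show ?thesis using that[of e] by (simp add: ce)
  next
    case False
    then have "f q = (z, q)" using Cons.prems(1) by auto
    then show ?thesis using that[of "- cnj e"] jacobi_step_swap[OF qz, of c "- cnj e"] by (simp add: ce)
  qed
  have "\<forall>q\<in>set qs. f q = (q, z) \<or> f q = (z, q)" "z \<notin> set qs" "admissible \<nu> cs"
    using Cons.prems by (auto simp: ce)
  then obtain cs' where "length cs' = length qs" "admissible \<nu> cs'"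
      "sweep (map f qs) cs (jacobi_step q z c e' A) = sweep (map (\<lambda>q. (q, z)) qs) cs' (jacobi_step q z c e' A)"
    using Cons.IH Cons.hyps by metis
  with step e' v show ?case by (intro exI[of _ "(c, e') # cs'"]) simp
qed simp

lemma serial_column_prefix:
  assumes "1 \<le> m" "\<forall>j\<in>{2..m}. bij_betw (\<tau> j) {1..<j} {1..<j}"
  shows "serial {1..m} (concat (map (\<lambda>j. map (\<lambda>k. (\<tau> j k, j)) [1..<j]) [2..<m+1]))"
  using assms
proof (induction m rule: dec_induct)
  case base
  show ?case using serial.singleton[of 1] by simp
next
  case (step m)
  have "bij_betw (\<tau> (Suc m)) {1..<Suc m} {1..<Suc m}" using step.prems step.hyps by auto
  then have "distinct (map (\<tau> (Suc m)) [1..<Suc m])" "set (map (\<tau> (Suc m)) [1..<Suc m]) = {1..m}"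
    by (auto simp: bij_betw_def distinct_map atLeastLessThanSuc_atLeastAtMost simp del: upt_Suc)
  then have "serial (insert (Suc m) {1..m})
      (concat (map (\<lambda>j. map (\<lambda>k. (\<tau> j k, j)) [1..<j]) [2..<m+1])
        @ map (\<lambda>q. (q, Suc m)) (map (\<tau> (Suc m)) [1..<Suc m]))"
    using step by (intro serial.extend) auto
  moreover have "insert (Suc m) {1..m} = {1..Suc m}" by auto
  ultimately show ?case using step.hyps by (simp add: o_def)
qed

lemma serial_row_suffix:
  assumes "a \<le> n" "1 \<le> a" "\<forall>i\<in>{1..<n}. bij_betw (\<tau> i) {i+1..n} {i+1..n}"
  shows "serial {a..n} (concat (map (\<lambda>i. map (\<lambda>k. (i, \<tau> i k)) [i+1..<n+1]) (rev [a..<n])))"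
  using assms
proof (induction a rule: inc_induct)
  case base
  show ?case using serial.singleton[of n] by simp
next
  case (step a)
  have "bij_betw (\<tau> a) {a+1..n} {a+1..n}" using step by auto
  then have "distinct (map (\<tau> a) [a+1..<n+1])" "set (map (\<tau> a) [a+1..<n+1]) = {Suc a..n}"
    by (auto simp: bij_betw_def distinct_map atLeastLessThanSuc_atLeastAtMost simp del: upt_Suc)
  then have "serial (insert a {Suc a..n})
      (concat (map (\<lambda>i. map (\<lambda>k. (i, \<tau> i k)) [i+1..<n+1]) (rev [Suc a..<n]))
        @ map (\<lambda>q. (a, q)) (map (\<tau> a) [a+1..<n+1]))"
    using step by (intro serial.extend) auto
  moreover have "insert a {Suc a..n} = {a..n}" "rev [a..<n] = rev [Suc a..<n] @ [a]"
    using step.hyps by (auto simp: upt_rec)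
  ultimately show ?case by (simp add: o_def)
qed

lemma Csp_serial:
  assumes "1 \<le> n" "ordr \<in> Csp n"
  obtains ps where "serial {1..n} ps" "ordr = ps \<or> ordr = rev ps"
proof -
  have "serial {1..n} ps" if "ps \<in> Cc n \<union> Cr n" for ps
    using that serial_column_prefix[OF assms(1)] serial_row_suffix[OF assms(1) order_refl]
    unfolding Cc_def Cr_def by auto
  then show ?thesis using assms(2) that unfolding Csp_def by blast
qed

lemma Csp_pairs_in: "1 \<le> n \<Longrightarrow> ordr \<in> Csp n \<Longrightarrow> pairs_in {1..n} ordr"
proof -
  assume "1 \<le> n" "ordr \<in> Csp n"
  then obtain ps where "serial {1..n} ps" "ordr = ps \<or> ordr = rev ps" by (rule Csp_serial)
  moreover from this(1) have "pairs_in {1..n} ps" by (simp add: serial_pairs_in)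
  ultimately show ?thesis by (auto simp: pairs_in_def)
qed

section \<open>Contraction along serial orderings\<close>

lemma norm_rotated_entry_ge:
  assumes "\<nu> \<le> \<bar>c\<bar>" "c\<^sup>2 + (cmod e)\<^sup>2 = 1" "cmod a = cmod e"
  shows "\<nu> * cmod y - cmod x \<le> cmod (a * x + of_real c * y)"
proof -
  have "cmod e \<le> 1" using assms(2) by (metis abs_norm_cancel abs_square_le_1 le_add_same_cancel2 zero_le_power2)
  then have "cmod (a * x) \<le> cmod x" using assms(3) by (simp add: norm_mult mult_left_le_one_le)
  moreover have "\<nu> * cmod y \<le> cmod (of_real c * y)" using assms(1) by (simp add: norm_mult mult_right_mono)
  moreover have "cmod (of_real c * y) - cmod (a * x) \<le> cmod (a * x + of_real c * y)"
    by (metis add.commute norm_diff_ineq)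
  ultimately show ?thesis by linarith
qed

lemma power_mul_le_step:
  fixes \<nu> a x x' y \<sigma> :: real
  assumes "0 \<le> \<nu>" "\<nu> \<le> 1" "\<nu> ^ m * a \<le> x + \<sigma>" "\<nu> * x - y \<le> x'" "0 \<le> \<sigma>"
  shows "\<nu> ^ Suc m * a \<le> x' + (y + \<sigma>)"
proof -
  have "\<nu> * (\<nu> ^ m * a) \<le> \<nu> * (x + \<sigma>)" using assms(3,1) by (rule mult_left_mono)
  moreover have "\<nu> * \<sigma> \<le> \<sigma>" using assms(5,1,2) by (rule mult_left_le_one_le)
  ultimately show ?thesis using assms(4) by (simp add: algebra_simps)
qed

lemma star_sweep_entry_bound:
  assumes "distinct qs" "z \<notin> set qs" "r \<notin> insert z (set qs)"
    "length qs = length cs" "admissible \<nu> cs" "0 \<le> \<nu>" "\<nu> \<le> 1"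
  shows "\<nu> ^ length qs * cmod (A r z)
           \<le> cmod (sweep (map (\<lambda>q. (q, z)) qs) cs A r z) + (\<Sum>q\<in>set qs. cmod (A r q))
       \<and> \<nu> ^ length qs * cmod (A z r)
           \<le> cmod (sweep (map (\<lambda>q. (q, z)) qs) cs A z r) + (\<Sum>q\<in>set qs. cmod (A q r))"
  using assms(1-5)
proof (induction qs arbitrary: cs rule: rev_induct)
  case (snoc q qs cs0)
  obtain cs c e where cs0: "cs0 = cs @ [(c, e)]"
    using snoc.prems(4) by (cases cs0 rule: rev_exhaust) fastforce+
  have len: "length qs = length cs" and v: "admissible \<nu> cs" "\<nu> \<le> \<bar>c\<bar>" "c\<^sup>2 + (cmod e)\<^sup>2 = 1"
    using snoc.prems(4,5) by (auto simp: cs0)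
  have q: "q \<notin> set qs" "q \<noteq> z" "r \<noteq> q" "r \<noteq> z" "r \<notin> set qs"
    using snoc.prems by auto
  let ?X = "sweep (map (\<lambda>q. (q, z)) qs) cs A"
  have X': "sweep (map (\<lambda>q. (q, z)) (qs @ [q])) cs0 A = jacobi_step q z c e ?X"
    using sweep_append[of "map (\<lambda>q. (q, z)) qs" cs "[(q, z)]" "[(c, e)]" A] len by (simp add: cs0)
  have untouched: "?X r q = A r q" "?X q r = A q r"
    using q snoc.prems(2) by (auto intro!: sweep_entry_untouched)
  have "r \<notin> {q, z}" using q by auto
  then have vals: "jacobi_step q z c e ?X r z = - e * A r q + of_real c * ?X r z"
      "jacobi_step q z c e ?X z r = - cnj e * A q r + of_real c * ?X z r"
    using jacobi_step_border(4,2)[OF q(2)] untouched by simp_all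
  have new: "\<nu> * cmod (?X r z) - cmod (A r q) \<le> cmod (jacobi_step q z c e ?X r z)"
            "\<nu> * cmod (?X z r) - cmod (A q r) \<le> cmod (jacobi_step q z c e ?X z r)"
    unfolding vals by (rule norm_rotated_entry_ge[OF v(2,3)]; simp)+
  have IH: "\<nu> ^ length qs * cmod (A r z) \<le> cmod (?X r z) + (\<Sum>q\<in>set qs. cmod (A r q))"
           "\<nu> ^ length qs * cmod (A z r) \<le> cmod (?X z r) + (\<Sum>q\<in>set qs. cmod (A q r))"
    using snoc.IH[OF _ _ _ len v(1)] snoc.prems by auto
  show ?case
    unfolding X'
    using power_mul_le_step[OF assms(6,7) IH(1) new(1)] power_mul_le_step[OF assms(6,7) IH(2) new(2)] q(1)
    by (simp add: sum_nonneg)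
qed simp_all

lemma sweep_pivot_le_decrease:
  assumes "finite S" "pairs_in S (ps @ (i, j) # ps')" "admissible \<nu> (cs @ (c, e) # cs')"
    "length ps = length cs" "length ps' = length cs'"
  shows "(cmod (sweep ps cs A i j))\<^sup>2 + (cmod (sweep ps cs A j i))\<^sup>2
           \<le> off2 S A - off2 S (sweep (ps @ (i, j) # ps') (cs @ (c, e) # cs') A)"
proof -
  let ?X = "sweep ps cs A"
  have p: "pairs_in S ps" "pairs_in S ps'" "i \<in> S" "j \<in> S" "i \<noteq> j"
    and v: "admissible \<nu> cs" "admissible \<nu> cs'" "c\<^sup>2 + (cmod e)\<^sup>2 = 1"
    using assms(2,3) by (auto simp: pairs_in_def)
  have "off2 S (sweep (ps @ (i, j) # ps') (cs @ (c, e) # cs') A)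
      = off2 S (sweep ps' cs' (jacobi_step i j c e ?X))"
    using sweep_append[OF assms(4)] by simp
  also have "\<dots> \<le> off2 S (jacobi_step i j c e ?X)"
    by (rule off2_sweep_le[OF assms(1) p(2) v(2) assms(5)])
  also have "\<dots> = off2 S ?X - (cmod (?X i j))\<^sup>2 - (cmod (?X j i))\<^sup>2"
    by (rule off2_jacobi_step[OF assms(1) p(3-5) v(3)])
  also have "off2 S ?X \<le> off2 S A"
    by (rule off2_sweep_le[OF assms(1) p(1) v(1) assms(4)])
  finally show ?thesis by simp
qed

lemma sq_le_of_power_mul_le:
  fixes \<nu> a W :: real
  assumes "0 < \<nu>" "\<nu> \<le> 1" "m \<le> k" "0 \<le> a" "0 \<le> W" "\<nu> ^ m * a \<le> (1 + real k) * sqrt W"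
  shows "a\<^sup>2 \<le> (1 + real k)\<^sup>2 / \<nu> ^ (2 * k) * W"
proof -
  have "\<nu> ^ k * a \<le> \<nu> ^ m * a" using assms by (intro mult_right_mono power_decreasing) auto
  then have "(\<nu> ^ k * a)\<^sup>2 \<le> ((1 + real k) * sqrt W)\<^sup>2"
    using assms by (intro power_mono) auto
  then have "\<nu> ^ (2 * k) * a\<^sup>2 \<le> (1 + real k)\<^sup>2 * W"
    using assms(5) by (simp add: power_mult_distrib power_mult mult.commute[of 2 k])
  then show ?thesis using assms(1) by (simp add: field_simps)
qed

lemma sum_entries_le_card_sqrt_off2:
  assumes "finite S" "r \<in> S" "Q \<subseteq> S - {r}"
  shows "(\<Sum>q\<in>Q. cmod (A r q)) \<le> real (card S) * sqrt (off2 S A)"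
    and "(\<Sum>q\<in>Q. cmod (A q r)) \<le> real (card S) * sqrt (off2 S A)"
proof -
  have "real (card Q) * sqrt (off2 S A) \<le> real (card S) * sqrt (off2 S A)"
    using assms card_mono[OF assms(1), of Q] off2_nonneg[of S A] by (intro mult_right_mono) auto
  moreover have "(cmod (A r q))\<^sup>2 \<le> off2 S A" "(cmod (A q r))\<^sup>2 \<le> off2 S A" if "q \<in> Q" for q
    using that assms entry_sq_le_off2[OF assms(1,2), of q A] entry_sq_le_off2[OF assms(1) _ assms(2), of q A]
    by auto
  then have "(\<Sum>q\<in>Q. cmod (A r q)) \<le> real (card Q) * sqrt (off2 S A)"
    "(\<Sum>q\<in>Q. cmod (A q r)) \<le> real (card Q) * sqrt (off2 S A)"
    by (intro sum_bounded_above real_le_rsqrt; simp)+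
  ultimately show "(\<Sum>q\<in>Q. cmod (A r q)) \<le> real (card S) * sqrt (off2 S A)"
    "(\<Sum>q\<in>Q. cmod (A q r)) \<le> real (card S) * sqrt (off2 S A)"
    by linarith+
qed

lemma star_sweep_cross_entry_le:
  assumes fS: "finite S" and zS: "z \<notin> S" and qs: "distinct qs" "set qs = S"
    and cs: "length cs = length qs" "admissible \<nu> cs" and \<nu>: "0 < \<nu>" "\<nu> \<le> 1" and r: "r \<in> S"
  shows "(cmod (A r z))\<^sup>2 + (cmod (A z r))\<^sup>2 \<le> 2 * ((1 + real (card S))\<^sup>2 / \<nu> ^ (2 * card S))
    * (off2 (insert z S) A - off2 (insert z S) (sweep (map (\<lambda>q. (q, z)) qs) cs A) + off2 S A)"
    (is "_ \<le> 2 * ?C * ?W")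
proof -
  obtain qs1 qs2 where qs1: "qs = qs1 @ r # qs2" using r qs(2) by (metis split_list)
  then have "length qs1 < length cs" using cs(1) by simp
  then obtain cs1 c e cs2 where cs1: "cs = cs1 @ (c, e) # cs2" "length cs1 = length qs1"
    by (metis id_take_nth_drop length_take min.absorb4 surj_pair)
  let ?X = "sweep (map (\<lambda>q. (q, z)) qs1) cs1 A"
  have "(cmod (?X r z))\<^sup>2 + (cmod (?X z r))\<^sup>2
      \<le> off2 (insert z S) A - off2 (insert z S) (sweep (map (\<lambda>q. (q, z)) qs) cs A)"
    unfolding qs1 cs1(1) map_append list.map using fS zS qs cs cs1 qs1
    by (intro sweep_pivot_le_decrease) (auto simp: pairs_in_def)
  then have "(cmod (?X r z))\<^sup>2 \<le> ?W" "(cmod (?X z r))\<^sup>2 \<le> ?W"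
    using off2_nonneg[of S A] zero_le_power2[of "cmod (?X r z)"] zero_le_power2[of "cmod (?X z r)"]
    by linarith+
  then have X: "cmod (?X r z) \<le> sqrt ?W" "cmod (?X z r) \<le> sqrt ?W"
    by (simp_all add: real_le_rsqrt)
  have entry: "\<nu> ^ length qs1 * cmod (A r z) \<le> cmod (?X r z) + (\<Sum>q\<in>set qs1. cmod (A r q))
       \<and> \<nu> ^ length qs1 * cmod (A z r) \<le> cmod (?X z r) + (\<Sum>q\<in>set qs1. cmod (A q r))"
    using qs zS \<nu> cs cs1 unfolding qs1 by (intro star_sweep_entry_bound) (auto simp: cs1(1))
  have inner: "off2 S A \<le> ?W"
    using off2_sweep_le[of "insert z S" "map (\<lambda>q. (q, z)) qs" \<nu> cs A] fS zS qs cs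
    by (force simp: pairs_in_def)
  then have W0: "0 \<le> ?W" using off2_nonneg[of S A] by linarith
  have "real (card S) * sqrt (off2 S A) \<le> real (card S) * sqrt ?W"
    using inner by (intro mult_left_mono) auto
  moreover have "set qs1 \<subseteq> S - {r}" using qs qs1 by auto
  ultimately have sums: "(\<Sum>q\<in>set qs1. cmod (A r q)) \<le> real (card S) * sqrt ?W"
      "(\<Sum>q\<in>set qs1. cmod (A q r)) \<le> real (card S) * sqrt ?W"
    using sum_entries_le_card_sqrt_off2[OF fS r, of "set qs1" A] by linarith+
  have "card S = length qs" using qs distinct_card by metis
  then have card: "length qs1 \<le> card S" by (simp add: qs1)
  with entry X sums have bounds: "\<nu> ^ length qs1 * cmod (A r z) \<le> (1 + real (card S)) * sqrt ?W"
      "\<nu> ^ length qs1 * cmod (A z r) \<le> (1 + real (card S)) * sqrt ?W"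
    by (simp_all add: algebra_simps)
  show ?thesis
    using sq_le_of_power_mul_le[OF \<nu> card(1) norm_ge_zero W0 bounds(1)]
      sq_le_of_power_mul_le[OF \<nu> card(1) norm_ge_zero W0 bounds(2)] by simp
qed

definition cross_const :: "real \<Rightarrow> nat \<Rightarrow> real" where
  "cross_const \<nu> k = 1 + 2 * real k * (1 + real k)\<^sup>2 / \<nu> ^ (2 * k)"

lemma cross_const_pos: "0 < \<nu> \<Longrightarrow> 0 < cross_const \<nu> k"
  unfolding cross_const_def by (simp add: add_pos_nonneg)

lemma cross2_le_decrease:
  assumes "finite S" "z \<notin> S" "distinct qs" "set qs = S"
    "length cs = length qs" "admissible \<nu> cs" "0 < \<nu>" "\<nu> \<le> 1"
  shows "cross2 S z A \<le> cross_const \<nu> (card S)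
    * (off2 (insert z S) A - off2 (insert z S) (sweep (map (\<lambda>q. (q, z)) qs) cs A) + off2 S A)"
    (is "_ \<le> _ * ?W")
proof -
  let ?C = "(1 + real (card S))\<^sup>2 / \<nu> ^ (2 * card S)"
  have "cross2 S z A \<le> (\<Sum>r\<in>S. 2 * ?C * ?W)"
    unfolding cross2_def using star_sweep_cross_entry_le[OF assms] by (rule sum_mono)
  also have "\<dots> = 2 * real (card S) * ?C * ?W" by simp
  also have "\<dots> \<le> cross_const \<nu> (card S) * ?W"
  proof (rule mult_right_mono)
    show "0 \<le> ?W"
      using off2_sweep_le[of "insert z S" "map (\<lambda>q. (q, z)) qs" \<nu> cs A] off2_nonneg[of S A] assms
      by (force simp: pairs_in_def)
  qed (simp add: cross_const_def)
  finally show ?thesis .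
qed

text \<open>In the induction step below, \<open>b\<close> and \<open>c\<close> are the inner and cross mass before the sweep,
  \<open>b'\<close> the inner mass after the sweep over the old indices and \<open>L\<close> the mass annihilated in the
  final pass.\<close>
lemma contraction_arith:
  fixes \<kappa> K b b' c L :: real
  assumes "0 \<le> \<kappa>" "\<kappa> < 1" "0 < K" "0 \<le> b" "0 \<le> c" "0 \<le> b'" "b' \<le> \<kappa> * b" "0 \<le> L"
    "c \<le> K * (L + b')"
  shows "b' + c - L \<le> (1 - (1 - \<kappa>) / (1 + 2 * K)) * (b + c)"
proof -
  have pos: "0 < 1 + 2 * K" using assms by simp
  have "(1 + 2 * K) * (b' + c - L) \<le> (2 * K + \<kappa>) * (b + c)"
  proof (cases "c \<le> 2 * K * b")
    case True
    have "(1 + 2 * K) * (b' + c - L) \<le> (1 + 2 * K) * (\<kappa> * b + c)"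
      using assms pos by (intro mult_left_mono) auto
    also have "\<dots> \<le> (2 * K + \<kappa>) * (b + c)"
      using mult_right_mono[OF True, of "1 - \<kappa>"] assms by (simp add: algebra_simps)
    finally show ?thesis .
  next
    case False
    have "b' \<le> b" using assms mult_right_mono[of \<kappa> 1 b] by linarith
    then have "K * b' \<le> K * b" using assms(3) by simp
    then have "c \<le> K * (L + b)" using assms(9) by (simp add: distrib_left)
    then have L: "c / (2 * K) \<le> L" using False assms(3) by (simp add: field_simps)
    have "(1 + 2 * K) * (b' + c - L) \<le> (1 + 2 * K) * (b + c - c / (2 * K))"
      using \<open>b' \<le> b\<close> L pos by (intro mult_left_mono) auto
    also have "\<dots> = (1 + 2 * K) * (b + c) - c - c / (2 * K)"
      using assms(3) by (simp add: field_simps)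
    also have "\<dots> \<le> (1 + 2 * K) * (b + c) - (b + c)"
      using False assms(3) by (simp add: field_simps)
    also have "\<dots> \<le> (2 * K + \<kappa>) * (b + c)"
      using assms by (simp add: algebra_simps)
    finally show ?thesis .
  qed
  then show ?thesis using pos by (simp add: field_simps)
qed

text \<open>The constant \<open>\<mu>\<^sub>n\<^sub>,\<^sub>\<nu>\<close> of the theorem is \<open>sqrt (serial_factor \<nu> n)\<close>.\<close>
fun serial_factor :: "real \<Rightarrow> nat \<Rightarrow> real" where
  "serial_factor \<nu> 0 = 0"
| "serial_factor \<nu> (Suc k) = 1 - (1 - serial_factor \<nu> k) / (1 + 2 * cross_const \<nu> k)"

lemma serial_factor_bounds: "0 < \<nu> \<Longrightarrow> 0 \<le> serial_factor \<nu> k \<and> serial_factor \<nu> k < 1"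
proof (induction k)
  case (Suc k)
  then have "0 < (1 - serial_factor \<nu> k) / (1 + 2 * cross_const \<nu> k)"
    "(1 - serial_factor \<nu> k) / (1 + 2 * cross_const \<nu> k) \<le> 1"
    using cross_const_pos[of \<nu> k] by (simp_all add: field_simps)
  then show ?case by simp
qed simp

lemma off2_sweep_serial_extend:
  assumes S: "finite S" "pairs_in S ps" and \<kappa>: "0 \<le> \<kappa>" "\<kappa> < 1"
    and IH: "\<And>cs A. length cs = length ps \<Longrightarrow> admissible \<nu> cs \<Longrightarrow>
               off2 S (sweep ps cs A) \<le> \<kappa> * off2 S A"
    and z: "z \<notin> S" "distinct qs" "set qs = S" "\<forall>q\<in>S. f q = (q, z) \<or> f q = (z, q)"
    and cs: "length cs = length (ps @ map f qs)" "admissible \<nu> cs" and \<nu>: "0 < \<nu>" "\<nu> \<le> 1"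
  shows "off2 (insert z S) (sweep (ps @ map f qs) cs A)
           \<le> (1 - (1 - \<kappa>) / (1 + 2 * cross_const \<nu> (card S))) * off2 (insert z S) A"
proof -
  let ?cs1 = "take (length ps) cs" and ?cs2 = "drop (length ps) cs"
  let ?A1 = "sweep ps ?cs1 A"
  have v: "admissible \<nu> ?cs1" "admissible \<nu> ?cs2"
    using cs(2) by (auto simp: admissible_def dest: in_set_takeD in_set_dropD)
  have "length ps = length ?cs1" using cs(1) by simp
  then have "sweep (ps @ map f qs) (?cs1 @ ?cs2) A = sweep (map f qs) ?cs2 ?A1"
    by (rule sweep_append)
  then have "sweep (ps @ map f qs) cs A = sweep (map f qs) ?cs2 ?A1" by simp
  moreover obtain cs' where cs': "length cs' = length qs" "admissible \<nu> cs'"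
    "sweep (map f qs) ?cs2 ?A1 = sweep (map (\<lambda>q. (q, z)) qs) cs' ?A1"
    using sweep_orient[of qs f z ?cs2 \<nu> ?A1] z cs(1) v(2) by auto
  ultimately have F: "sweep (ps @ map f qs) cs A = sweep (map (\<lambda>q. (q, z)) qs) cs' ?A1" by simp
  let ?L = "off2 (insert z S) ?A1 - off2 (insert z S) (sweep (map (\<lambda>q. (q, z)) qs) cs' ?A1)"
  have inner: "off2 S ?A1 \<le> \<kappa> * off2 S A" using IH v(1) cs(1) by simp
  have cross: "cross2 S z ?A1 = cross2 S z A" using cross2_sweep[OF S v(1)] z(1) cs(1) by simp
  have bound: "cross2 S z A \<le> cross_const \<nu> (card S) * (?L + off2 S ?A1)"
    using cross2_le_decrease[OF S(1) z(1-3) cs'(1,2) \<nu>, of ?A1] cross by simp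
  have L: "0 \<le> ?L"
    using off2_sweep_le[of "insert z S" "map (\<lambda>q. (q, z)) qs" \<nu> cs' ?A1] S z cs'
    by (force simp: pairs_in_def)
  have "off2 (insert z S) (sweep (ps @ map f qs) cs A) = off2 S ?A1 + cross2 S z A - ?L"
    using off2_insert[OF S(1) z(1)] cross by (simp add: F)
  also have "\<dots> \<le> (1 - (1 - \<kappa>) / (1 + 2 * cross_const \<nu> (card S))) * (off2 S A + cross2 S z A)"
    by (rule contraction_arith[OF \<kappa> cross_const_pos[OF \<nu>(1)] off2_nonneg cross2_nonneg off2_nonneg
          inner L bound])
  finally show ?thesis by (simp add: off2_insert[OF S(1) z(1)])
qed

lemma off2_sweep_serial:
  assumes "serial S ps" "length cs = length ps" "admissible \<nu> cs" "0 < \<nu>" "\<nu> \<le> 1"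
  shows "off2 S (sweep ps cs A) \<le> serial_factor \<nu> (card S) * off2 S A"
  using assms(1-3)
proof (induction arbitrary: cs A rule: serial.induct)
  case (extend S ps z qs f)
  have "finite S" "pairs_in S ps" using serial_pairs_in[OF extend.hyps(1)] by auto
  then show ?case
    using off2_sweep_serial_extend[OF _ _ _ _ extend.IH extend.hyps(2-5) extend.prems assms(4,5)]
      serial_factor_bounds[OF assms(4), of "card S"] extend.hyps(2)
    by simp
qed simp

lemma off2_sweep_rev_le:
  assumes S: "finite S" "pairs_in S ps" and "0 \<le> \<kappa>"
    and H: "\<And>cs A. length cs = length ps \<Longrightarrow> admissible \<nu> cs \<Longrightarrow>
              off2 S (sweep ps cs A) \<le> \<kappa> * off2 S A"
    and cs: "length cs = length ps" "admissible \<nu> cs"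
  shows "off2 S (sweep (rev ps) cs B) \<le> \<kappa> * off2 S B"
proof -
  let ?A = "sweep (rev ps) cs B" and ?cs = "rev (map (\<lambda>(c, e). (c, - e)) cs)"
  have "rev (map (\<lambda>(c, e). (c, - e)) ?cs) = cs"
    by (simp add: rev_map[symmetric] comp_def case_prod_beta map_idI)
  then have "off_inner S (sweep ps ?cs ?A) B = of_real (off2 S ?A)"
    using off_inner_sweep[OF S, of ?cs ?A B] cs(1) by (simp add: off_inner_self)
  then have "(off2 S ?A)\<^sup>2 \<le> off2 S (sweep ps ?cs ?A) * off2 S B"
    using norm_off_inner_sq_le[OF S(1), of "sweep ps ?cs ?A" B] off2_nonneg[of S ?A] by simp
  also have "\<dots> \<le> \<kappa> * off2 S ?A * off2 S B"
  proof (rule mult_right_mono[OF H])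
    show "admissible \<nu> ?cs" using cs(2) by (auto simp: admissible_def)
  qed (use cs(1) off2_nonneg in auto)
  finally have sq: "off2 S ?A * off2 S ?A \<le> off2 S ?A * (\<kappa> * off2 S B)"
    by (simp add: power2_eq_square algebra_simps)
  show ?thesis
  proof (cases "off2 S ?A = 0")
    case True
    then show ?thesis using \<open>0 \<le> \<kappa>\<close> off2_nonneg[of S B] by simp
  next
    case False
    then have "0 < off2 S ?A" using off2_nonneg[of S ?A] by linarith
    then show ?thesis by (rule mult_left_le_imp_le[OF sq])
  qed
qed

lemma off2_sweep_Csp:
  assumes "1 \<le> n" "ordr \<in> Csp n" "length cs = length ordr" "admissible \<nu> cs" "0 < \<nu>" "\<nu> \<le> 1"
  shows "off2 {1..n} (sweep ordr cs A) \<le> serial_factor \<nu> n * off2 {1..n} A"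
proof -
  obtain ps where ps: "serial {1..n} ps" "ordr = ps \<or> ordr = rev ps"
    using Csp_serial[OF assms(1,2)] .
  have H: "off2 {1..n} (sweep ps cs' B) \<le> serial_factor \<nu> n * off2 {1..n} B"
    if "length cs' = length ps" "admissible \<nu> cs'" for cs' B
    using off2_sweep_serial[OF ps(1) that assms(5,6)] by simp
  from ps(2) show ?thesis
  proof
    assume "ordr = ps"
    then show ?thesis using H assms(3,4) by simp
  next
    assume "ordr = rev ps"
    then show ?thesis
      using off2_sweep_rev_le[OF _ _ _ H] serial_pairs_in[OF ps(1)] serial_factor_bounds[OF assms(5)]
        assms(3,4) by simp
  qed
qed

section \<open>Jacobi operators as sweeps\<close>

lemma cnj_exp_i_real: "cnj (exp (\<i> * of_real a)) = exp (- (\<i> * of_real a))"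
  by (metis cis_cnj cis_conv_exp mult_minus_right of_real_minus)

lemma sum_mult_rot:
  fixes \<phi> \<alpha> :: real
  assumes ij: "i \<noteq> j" "i \<in> {1..n}" "j \<in> {1..n}" and t: "t \<in> {1..n}"
  defines "e \<equiv> exp (\<i> * of_real \<alpha>) * of_real (sin \<phi>)"
  shows "(\<Sum>k=1..n. f k * rot i j \<phi> \<alpha> k t) =
     (if t = i then f i * of_real (cos \<phi>) + f j * cnj e
      else if t = j then - (f i * e) + f j * of_real (cos \<phi>) else f t)"
proof -
  have "f k * rot i j \<phi> \<alpha> k t =
     (if k = i then (if t = i then f i * of_real (cos \<phi>) else if t = j then - (f i * e) else 0) else 0)
   + (if k = j then (if t = i then f j * cnj e else if t = j then f j * of_real (cos \<phi>) else 0) else 0)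
   + (if k = t \<and> t \<notin> {i, j} then f t else 0)" for k
    using ij unfolding e_def by (auto simp: rot_def cnj_exp_i_real)
  then show ?thesis
    using ij t by (simp add: sum.distrib)
qed

lemma nuij_conj_rot:
  assumes ij: "i \<noteq> j" "i \<in> {1..n}" "j \<in> {1..n}" and st: "s \<in> {1..n}" "t \<in> {1..n}" "s \<noteq> t"
  shows "nuij i j (mmul n (mmul n (adj (rot i j \<phi> \<alpha>)) A) (rot i j \<phi> \<alpha>)) s t
       = jacobi_step i j (cos \<phi>) (exp (\<i> * of_real \<alpha>) * of_real (sin \<phi>)) A s t"
proof -
  let ?e = "exp (\<i> * of_real \<alpha>) * of_real (sin \<phi>)"
  have row: "mmul n (adj (rot i j \<phi> \<alpha>)) A s' k =
     (if s' = i then of_real (cos \<phi>) * A i k + ?e * A j k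
      else if s' = j then - cnj ?e * A i k + of_real (cos \<phi>) * A j k else A s' k)"
    if "s' \<in> {1..n}" for s' k
  proof -
    have "mmul n (adj (rot i j \<phi> \<alpha>)) A s' k = cnj (\<Sum>l=1..n. cnj (A l k) * rot i j \<phi> \<alpha> l s')"
      unfolding mmul_def adj_def by (simp add: mult.commute)
    then show ?thesis unfolding sum_mult_rot[OF ij that] by (auto simp: mult.commute)
  qed
  have "mmul n (mmul n (adj (rot i j \<phi> \<alpha>)) A) (rot i j \<phi> \<alpha>) s t
      = (\<Sum>k=1..n. mmul n (adj (rot i j \<phi> \<alpha>)) A s k * rot i j \<phi> \<alpha> k t)"
    unfolding mmul_def ..
  then show ?thesis
    unfolding sum_mult_rot[OF ij st(2)] nuij_def row[OF st(1)]
    using ij st by (auto simp: jacobi_step_def algebra_simps row)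
qed

definition ve_upper :: "nat \<Rightarrow> cmat \<Rightarrow> complex list" where
  "ve_upper n A = concat (map (\<lambda>t. map (\<lambda>s. A s t) [1..<t]) [2..<n+1])"

lemma ve_eq_ve_upper: "ve n A = ve_upper n A @ ve_upper n (\<lambda>s t. A t s)"
  unfolding ve_def ve_upper_def ..

lemma ve_upper_0 [simp]: "ve_upper 0 A = []"
  by (simp add: ve_upper_def)

lemma ve_upper_Suc: "ve_upper (Suc n) A = ve_upper n A @ map (\<lambda>s. A s (Suc n)) [1..<Suc n]"
  by (cases n) (simp_all add: ve_upper_def)

lemma NN_Suc: "NN (Suc n) = NN n + n"
proof -
  have "Suc n * n = n * (n - 1) + 2 * n" by (cases n) (simp_all add: algebra_simps)
  then show ?thesis unfolding NN_def by simp
qed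

lemma length_ve_upper: "length (ve_upper n A) = NN n"
  by (induction n) (simp_all add: ve_upper_Suc NN_Suc, simp add: NN_def)

lemma length_ve: "length (ve n A) = 2 * NN n"
  by (simp add: ve_eq_ve_upper length_ve_upper)

lemma ve_upper_cong:
  "(\<And>s t. 1 \<le> s \<Longrightarrow> s < t \<Longrightarrow> t \<le> n \<Longrightarrow> A s t = B s t) \<Longrightarrow> ve_upper n A = ve_upper n B"
proof (induction n)
  case (Suc n)
  have "map (\<lambda>s. A s (Suc n)) [1..<Suc n] = map (\<lambda>s. B s (Suc n)) [1..<Suc n]"
    by (rule map_cong[OF refl]) (rule Suc.prems; auto)
  with Suc show ?case by (simp add: ve_upper_Suc del: upt_Suc)
qed simp

lemma ve_cong:
  assumes "\<And>s t. s \<in> {1..n} \<Longrightarrow> t \<in> {1..n} \<Longrightarrow> s \<noteq> t \<Longrightarrow> A s t = B s t"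
  shows "ve n A = ve n B"
proof -
  have "ve_upper n A = ve_upper n B" "ve_upper n (\<lambda>s t. A t s) = ve_upper n (\<lambda>s t. B t s)"
    by (rule ve_upper_cong; simp add: assms)+
  then show ?thesis by (simp add: ve_eq_ve_upper)
qed

lemma sum_sq_ve: "(\<Sum>x\<leftarrow>ve n A. (cmod x)\<^sup>2) = off2 {1..n} A"
proof (induction n)
  case 0
  have "offdiag {1..0} = {}" by (auto simp: offdiag_def)
  then show ?case by (simp add: ve_eq_ve_upper off2_def)
next
  case (Suc n)
  have col: "(\<Sum>s\<leftarrow>[1..<Suc n]. (cmod (g s))\<^sup>2) = (\<Sum>s\<in>{1..n}. (cmod (g s))\<^sup>2)" for g
    by (simp add: sum_list_distinct_conv_sum_set atLeastLessThanSuc_atLeastAtMost del: upt_Suc)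
  have "{1..Suc n} = insert (Suc n) {1..n}" by auto
  then have "off2 {1..Suc n} A = off2 {1..n} A + cross2 {1..n} (Suc n) A"
    by (simp add: off2_insert)
  with Suc.IH col[of "\<lambda>s. A s (Suc n)"] col[of "A (Suc n)"] show ?case
    by (simp add: ve_eq_ve_upper ve_upper_Suc o_def cross2_def sum.distrib del: upt_Suc)
qed

lemma vnorm_ve: "vnorm (ve n A) = sqrt (off2 {1..n} A)"
  by (simp add: vnorm_def sum_sq_ve)

lemma ve_upper_surj: "length x = NN n \<Longrightarrow> \<exists>A. ve_upper n A = x"
proof (induction n arbitrary: x)
  case 0
  then show ?case by (simp add: NN_def)
next
  case (Suc n)
  let ?d = "drop (NN n) x"
  obtain A0 where A0: "ve_upper n A0 = take (NN n) x"
    using Suc.IH[of "take (NN n) x"] Suc.prems by (auto simp: NN_Suc)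
  define A where "A = (\<lambda>s t. if t = Suc n then ?d ! (s - 1) else A0 s t)"
  have "ve_upper n A = ve_upper n A0" by (rule ve_upper_cong) (simp add: A_def)
  moreover have "map (\<lambda>s. A s (Suc n)) [1..<Suc n] = ?d"
    using Suc.prems by (intro nth_equalityI) (simp_all add: A_def NN_Suc del: upt_Suc)
  ultimately have "ve_upper (Suc n) A = take (NN n) x @ ?d" using A0 by (simp add: ve_upper_Suc)
  then show ?case by auto
qed

lemma ve_surj:
  assumes "length x = 2 * NN n"
  shows "\<exists>A. ve n A = x"
proof -
  obtain A1 A2 where A1: "ve_upper n A1 = take (NN n) x" and A2: "ve_upper n A2 = drop (NN n) x"
    using ve_upper_surj[of "take (NN n) x" n] ve_upper_surj[of "drop (NN n) x" n] assms by auto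
  define A where "A = (\<lambda>s t. if s < t then A1 s t else A2 t s)"
  have "ve_upper n A = ve_upper n A1" "ve_upper n (\<lambda>s t. A t s) = ve_upper n A2"
    by (rule ve_upper_cong; simp add: A_def)+
  then have "ve n A = take (NN n) x @ drop (NN n) x" using A1 A2 by (simp add: ve_eq_ve_upper)
  then show ?thesis by auto
qed

lemma matvec_mmul0:
  assumes "length x = m"
  shows "matvec m (mmul0 m P Q) x = matvec m P (matvec m Q x)"
proof -
  have "(\<Sum>q<m. mmul0 m P Q p q * x ! q) = (\<Sum>k<m. P p k * matvec m Q x ! k)" for p
  proof -
    have "(\<Sum>k<m. P p k * matvec m Q x ! k) = (\<Sum>k<m. \<Sum>q<m. P p k * Q k q * x ! q)"
      by (simp add: matvec_def sum_distrib_left mult.assoc)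
    also have "\<dots> = (\<Sum>q<m. mmul0 m P Q p q * x ! q)"
      by (subst sum.swap) (simp add: mmul0_def sum_distrib_right)
    finally show ?thesis by simp
  qed
  then show ?thesis unfolding matvec_def[of m "mmul0 m P Q"] matvec_def[of m P] by simp
qed

lemma matvec_id0: "length x = m \<Longrightarrow> matvec m id0 x = x"
proof (intro nth_equalityI)
  fix p assume "length x = m" "p < length (matvec m id0 x)"
  then have "p < m" by (simp add: matvec_def)
  have "(\<Sum>q<m. id0 p q * x ! q) = (\<Sum>q<m. if q = p then x ! p else 0)"
    by (rule sum.cong) (auto simp: id0_def)
  with \<open>p < m\<close> show "matvec m id0 x ! p = x ! p" by (simp add: matvec_def)
qed (simp add: matvec_def)

lemma annihilator_acts_as_jacobi_step:
  assumes "M \<in> annihilators n i j \<nu>" "i \<noteq> j" "i \<in> {1..n}" "j \<in> {1..n}"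
  obtains c e where "\<nu> \<le> \<bar>c\<bar>" "c\<^sup>2 + (cmod e)\<^sup>2 = 1"
    "\<And>A. matvec (2 * NN n) M (ve n A) = ve n (jacobi_step i j c e A)"
proof -
  obtain \<phi> \<alpha> where \<phi>: "\<nu> \<le> \<bar>cos \<phi>\<bar>" and M: "\<And>A. matvec (2 * NN n) M (ve n A)
      = ve n (nuij i j (mmul n (mmul n (adj (rot i j \<phi> \<alpha>)) A) (rot i j \<phi> \<alpha>)))"
    using assms(1) unfolding annihilators_def by blast
  let ?e = "exp (\<i> * of_real \<alpha>) * of_real (sin \<phi>)"
  have "(cos \<phi>)\<^sup>2 + (cmod ?e)\<^sup>2 = 1" by (simp add: norm_mult)
  moreover have "matvec (2 * NN n) M (ve n A) = ve n (jacobi_step i j (cos \<phi>) ?e A)" for A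
    unfolding M by (rule ve_cong) (rule nuij_conj_rot[OF assms(2-4)])
  ultimately show ?thesis using that \<phi> by blast
qed

lemma jacobi_op_eq_sweep:
  assumes "length Ms = length ordr" "pairs_in {1..n} ordr"
    "\<forall>k<length ordr. Ms ! k \<in> annihilators n (fst (ordr ! k)) (snd (ordr ! k)) \<nu>"
  shows "\<exists>cs. length cs = length ordr \<and> admissible \<nu> cs \<and>
     (\<forall>A. matvec (2 * NN n) (mprod (2 * NN n) Ms) (ve n A) = ve n (sweep ordr cs A))"
  using assms
proof (induction Ms ordr rule: list_induct2)
  case Nil
  show ?case by (simp add: admissible_def matvec_id0 length_ve)
next
  case (Cons M Ms p ps)
  obtain i j where p: "p = (i, j)" by fastforce
  have ij: "i \<noteq> j" "i \<in> {1..n}" "j \<in> {1..n}" and "pairs_in {1..n} ps"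
    using Cons.prems(1) by (simp_all add: p)
  moreover have "\<forall>k<length ps. Ms ! k \<in> annihilators n (fst (ps ! k)) (snd (ps ! k)) \<nu>"
    using Cons.prems(2) by auto
  ultimately obtain cs where cs: "length cs = length ps" "admissible \<nu> cs"
    "\<forall>A. matvec (2 * NN n) (mprod (2 * NN n) Ms) (ve n A) = ve n (sweep ps cs A)"
    using Cons.IH by blast
  have "M \<in> annihilators n i j \<nu>" using Cons.prems(2) by (force simp: p)
  then obtain c e where ce: "\<nu> \<le> \<bar>c\<bar>" "c\<^sup>2 + (cmod e)\<^sup>2 = 1"
    "\<And>A. matvec (2 * NN n) M (ve n A) = ve n (jacobi_step i j c e A)"
    using annihilator_acts_as_jacobi_step[OF _ ij] by blast
  show ?case
    by (rule exI[of _ "(c, e) # cs"])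
      (simp add: p cs ce matvec_mmul0 length_ve)
qed

lemma spec_norm_le:
  assumes "0 < m" "\<And>x. length x = m \<Longrightarrow> vnorm (matvec m M x) \<le> C * vnorm x"
  shows "spec_norm m M \<le> C"
  unfolding spec_norm_def
proof (rule cSup_least)
  let ?e = "1 # replicate (m - 1) (0 :: complex)"
  have "length ?e = m" "vnorm ?e = 1" using assms(1) by (simp_all add: vnorm_def sum_list_replicate)
  then show "{vnorm (matvec m M x) | x. length x = m \<and> vnorm x = 1} \<noteq> {}" by blast
qed (use assms(2) in force)

lemma NN_pos: "2 \<le> n \<Longrightarrow> 0 < NN n"
proof -
  assume "2 \<le> n"
  then have "2 * 1 \<le> n * (n - 1)" by (intro mult_le_mono) auto
  then show ?thesis unfolding NN_def by simp
qed

lemma spec_norm_jacobi_op_le: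
  assumes n: "2 \<le> n" and \<nu>: "0 < \<nu>" "\<nu> \<le> 1"
    and ordr: "ordr \<in> Csp n" and J_op: "J \<in> jacobi_ops n ordr \<nu>"
  shows "spec_norm (2 * NN n) J \<le> sqrt (serial_factor \<nu> n)"
proof -
  have n1: "1 \<le> n" using n by simp
  obtain Ms where J: "J = mprod (2 * NN n) Ms" "length Ms = length ordr"
    "\<forall>k<length ordr. Ms ! k \<in> annihilators n (fst (ordr ! k)) (snd (ordr ! k)) \<nu>"
    using J_op unfolding jacobi_ops_def by blast
  obtain cs where cs: "length cs = length ordr" "admissible \<nu> cs"
    "\<And>A. matvec (2 * NN n) J (ve n A) = ve n (sweep ordr cs A)"
    using jacobi_op_eq_sweep[OF J(2) Csp_pairs_in[OF n1 ordr] J(3)] J(1) by blast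
  show ?thesis
  proof (rule spec_norm_le)
    show "0 < 2 * NN n" using NN_pos[OF n] by simp
    fix x :: "complex list" assume "length x = 2 * NN n"
    then obtain A where "x = ve n A" using ve_surj by metis
    then show "vnorm (matvec (2 * NN n) J x) \<le> sqrt (serial_factor \<nu> n) * vnorm x"
      using off2_sweep_Csp[OF n1 ordr cs(1,2) \<nu>, of A]
      by (simp add: cs(3) vnorm_ve real_sqrt_mult[symmetric])
  qed
qed

theorem theorem3p3:
  fixes n :: nat and \<nu> :: real
  assumes "2 \<le> n" and "0 < \<nu>" and "\<nu> \<le> 1"
  shows "\<exists>\<mu>. 0 \<le> \<mu> \<and> \<mu> < 1 \<and>
           (\<forall>ordr \<in> Csp n. \<forall>J \<in> jacobi_ops n ordr \<nu>. spec_norm (2 * NN n) J \<le> \<mu>)"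
proof (intro exI conjI ballI)
  show "0 \<le> sqrt (serial_factor \<nu> n)" "sqrt (serial_factor \<nu> n) < 1"
    using serial_factor_bounds[OF assms(2), of n] by auto
  show "spec_norm (2 * NN n) J \<le> sqrt (serial_factor \<nu> n)" if "ordr \<in> Csp n" "J \<in> jacobi_ops n ordr \<nu>"
    for ordr J
    using spec_norm_jacobi_op_le[OF assms that] .
qed

end
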